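(* Let $q=1-p=o\!\left(\frac1n\right)$ and $qn^{1.5}\to\infty$ as $n\to\infty$. Then for all sufficiently large $n\in\mathbb{N}$ we have $u_2(n,p)=u_2'(n,p)=4$.
   Context: $G(n,p)$ is the Erdős–Rényi random graph on $n$ labelled vertices (vertex set $V$), each edge present independently with probability $p=p(n)$; $\mathbb{P}_{n,p}$ is the corresponding probability and $q=1-p$. A diameter graph in $\mathbb{R}^d$ is a graph $(V,E)$ with $V\subset\mathbb{R}^d$ finite and $E=\{\{\mathbf{x},\mathbf{y}\}\subseteq V: |\mathbf{x}-\mathbf{y}|=\operatorname{diam}V\}$, where $\operatorname{diam}V=\max_{\mathbf{x},\mathbf{y}\in V}|\mathbf{x}-\mathbf{y}|$ (Euclidean norm); a graph is a diameter graph in $\mathbb{R}^d$ if it is isomorphic to one. $u_d(n,p)$ is the largest positive integer $k$ such that $\mathbb{P}_{n,p}\big(\exists W\subseteq V,\ |W|=k,\ G[W]$ is a diameter graph in $\mathbb{R}^d$ and $\chi(G[W])=d+1\big)>\frac12$, where $G[W]$ is the induced subgraph; if no such $k$ exists, $u_d(n,p)=0$. $u_d'(n,p)$ is defined identically with the additional requirement that $G[W]$ be connected. *)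

theory Defs
  imports "HOL-Analysis.Analysis" "HOL-Library.Landau_Symbols"
begin

text \<open>Vertex set of G(n,p) is {0..<n}; a graph is given by its edge set,
  a set of 2-element subsets of {0..<n}.\<close>

definition all_edges :: "nat \<Rightarrow> nat set set" where
  "all_edges n = {{i, j} | i j. i < n \<and> j < n \<and> i \<noteq> j}"

definition prob_Gnp :: "nat \<Rightarrow> real \<Rightarrow> (nat set set \<Rightarrow> bool) \<Rightarrow> real" where
  "prob_Gnp n p A =
     (\<Sum>E\<in>{E. E \<subseteq> all_edges n \<and> A E}.
        p ^ card E * (1 - p) ^ (card (all_edges n) - card E))"

definition induced_edges :: "nat set set \<Rightarrow> nat set \<Rightarrow> nat set set" where
  "induced_edges E W = {e \<in> E. e \<subseteq> W}"

text \<open>Euclidean distance in R^d, points represented by their first d coordinates.\<close>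
definition edist :: "nat \<Rightarrow> (nat \<Rightarrow> real) \<Rightarrow> (nat \<Rightarrow> real) \<Rightarrow> real" where
  "edist d x y = sqrt (\<Sum>i<d. (x i - y i)^2)"

definition is_diameter_graph :: "nat \<Rightarrow> 'v set \<Rightarrow> 'v set set \<Rightarrow> bool" where
  "is_diameter_graph d W F \<longleftrightarrow> finite W \<and> W \<noteq> {} \<and>
     (\<exists>f :: 'v \<Rightarrow> (nat \<Rightarrow> real).
        (\<forall>u\<in>W. \<forall>v\<in>W. u \<noteq> v \<longrightarrow> edist d (f u) (f v) \<noteq> 0) \<and>
        F = {{u, v} | u v. u \<in> W \<and> v \<in> W \<and> u \<noteq> v \<and>
               edist d (f u) (f v) = Max ((\<lambda>(a, b). edist d (f a) (f b)) ` (W \<times> W))})"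

definition chromatic_number :: "'v set \<Rightarrow> 'v set set \<Rightarrow> nat" where
  "chromatic_number W F = (LEAST k. \<exists>c :: 'v \<Rightarrow> nat.
      (\<forall>v\<in>W. c v < k) \<and> (\<forall>u\<in>W. \<forall>v\<in>W. u \<noteq> v \<and> {u, v} \<in> F \<longrightarrow> c u \<noteq> c v))"

definition graph_connected :: "'v set \<Rightarrow> 'v set set \<Rightarrow> bool" where
  "graph_connected W F \<longleftrightarrow>
     (\<forall>u\<in>W. \<forall>v\<in>W. (\<lambda>a b. a \<in> W \<and> b \<in> W \<and> a \<noteq> b \<and> {a, b} \<in> F)\<^sup>*\<^sup>* u v)"

definition good_set :: "nat \<Rightarrow> nat set set \<Rightarrow> nat set \<Rightarrow> bool" where
  "good_set d E W \<longleftrightarrow> is_diameter_graph d W (induced_edges E W) \<and>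
      chromatic_number W (induced_edges E W) = d + 1"

definition u_d :: "nat \<Rightarrow> nat \<Rightarrow> real \<Rightarrow> nat" where
  "u_d d n p =
     (let P = (\<lambda>k. 0 < k \<and> prob_Gnp n p (\<lambda>E. \<exists>W \<subseteq> {0..<n}. card W = k \<and> good_set d E W) > 1/2)
      in if \<exists>k. P k then GREATEST k. P k else 0)"

definition u_d' :: "nat \<Rightarrow> nat \<Rightarrow> real \<Rightarrow> nat" where
  "u_d' d n p =
     (let P = (\<lambda>k. 0 < k \<and> prob_Gnp n p (\<lambda>E. \<exists>W \<subseteq> {0..<n}. card W = k \<and> good_set d E W
                     \<and> graph_connected W (induced_edges E W)) > 1/2)
      in if \<exists>k. P k then GREATEST k. P k else 0)"

end

theory Submission
  imports Defs
begin

text \<open>In the plane a diameter graph contains no 4-cycle: four points at diameter distance along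
  a cycle would form a rhombus whose diagonals are at most its side, contradicting the
  parallelogram law. When \<open>q = o(1/n)\<close> the complement of \<open>G(n,p)\<close> a.a.s.\ has no cycle of
  length 3, 4 or 5, and then any five vertices of \<open>G\<close> span a 4-cycle, so no induced diameter
  graph has five vertices. Conversely, when \<open>q n\<^sup>3\<^sup>/\<^sup>2 \<rightarrow> \<infinity>\<close> some vertex \<open>v\<close> a.a.s.\ has two
  non-neighbours \<open>a, c\<close>; these are adjacent (no complementary triangle), and since every vertex
  has fewer than \<open>n/4\<close> non-neighbours, \<open>v, a, c\<close> have a common neighbour \<open>d\<close>. The resulting
  paw (triangle \<open>acd\<close> with pendant edge \<open>dv\<close>) is realised by a unit equilateral triangle and a
  point at unit distance from \<open>d\<close> that is closer to \<open>a\<close> and \<open>c\<close>; it is connected and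
  3-chromatic.\<close>

section \<open>Independent coins on a finite set\<close>

definition bernoulli_weight :: "real \<Rightarrow> 'a set \<Rightarrow> 'a set \<Rightarrow> real" where
  "bernoulli_weight p U E = p ^ card E * (1 - p) ^ card (U - E)"

definition coin_prob :: "real \<Rightarrow> 'a set \<Rightarrow> ('a set \<Rightarrow> bool) \<Rightarrow> real" where
  "coin_prob p U A = (\<Sum>E\<in>Pow U. bernoulli_weight p U E * (if A E then 1 else 0))"

lemma bernoulli_weight_Un:
  assumes "finite U1" "finite U2" "U1 \<inter> U2 = {}" "A \<subseteq> U1" "B \<subseteq> U2"
  shows "bernoulli_weight p (U1 \<union> U2) (A \<union> B) = bernoulli_weight p U1 A * bernoulli_weight p U2 B"
proof -
  have "finite A" "finite B" using assms(1,2,4,5) finite_subset by blast+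
  then have "card (A \<union> B) = card A + card B"
    using assms by (intro card_Un_disjoint) auto
  moreover have "(U1 \<union> U2) - (A \<union> B) = (U1 - A) \<union> (U2 - B)" using assms by auto
  moreover have "card ((U1 - A) \<union> (U2 - B)) = card (U1 - A) + card (U2 - B)"
    using assms by (intro card_Un_disjoint) auto
  ultimately show ?thesis unfolding bernoulli_weight_def by (simp add: power_add algebra_simps)
qed

lemma bij_betw_Un_Pow_Times:
  assumes "U1 \<inter> U2 = {}"
  shows "bij_betw (\<lambda>(A, B). A \<union> B) (Pow U1 \<times> Pow U2) (Pow (U1 \<union> U2))"
  by (rule bij_betwI[where g = "\<lambda>E. (E \<inter> U1, E \<inter> U2)"]) (use assms in auto)

lemma sum_Pow_Un_bernoulli_weight:
  assumes "finite U1" "finite U2" "U1 \<inter> U2 = {}"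
  shows "(\<Sum>E\<in>Pow (U1 \<union> U2). bernoulli_weight p (U1 \<union> U2) E * f (E \<inter> U1) * g (E \<inter> U2))
       = (\<Sum>E\<in>Pow U1. bernoulli_weight p U1 E * f E) * (\<Sum>E\<in>Pow U2. bernoulli_weight p U2 E * g E)"
proof -
  define h where "h E = bernoulli_weight p (U1 \<union> U2) E * f (E \<inter> U1) * g (E \<inter> U2)" for E
  have h_Un: "h (A \<union> B) = (bernoulli_weight p U1 A * f A) * (bernoulli_weight p U2 B * g B)"
    if "A \<subseteq> U1" "B \<subseteq> U2" for A B
  proof -
    have "(A \<union> B) \<inter> U1 = A" "(A \<union> B) \<inter> U2 = B" using that assms(3) by auto
    then show ?thesis unfolding h_def using bernoulli_weight_Un[OF assms that] by simp
  qed
  have "(\<Sum>E\<in>Pow (U1 \<union> U2). h E) = (\<Sum>(A, B)\<in>Pow U1 \<times> Pow U2. h (A \<union> B))"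
    using sum.reindex_bij_betw[OF bij_betw_Un_Pow_Times[OF assms(3)], of h]
    by (simp add: case_prod_unfold)
  also have "\<dots> = (\<Sum>A\<in>Pow U1. \<Sum>B\<in>Pow U2. h (A \<union> B))"
    by (rule sum.cartesian_product[symmetric])
  also have "\<dots> = (\<Sum>A\<in>Pow U1. \<Sum>B\<in>Pow U2. (bernoulli_weight p U1 A * f A) * (bernoulli_weight p U2 B * g B))"
    by (simp add: h_Un)
  finally show ?thesis unfolding h_def by (simp add: sum_product)
qed

lemma sum_bernoulli_weight:
  assumes "finite U"
  shows "(\<Sum>E\<in>Pow U. bernoulli_weight p U E) = 1"
proof -
  have "(\<Prod>x\<in>U. p + (1 - p)) = (\<Sum>X\<in>Pow U. (\<Prod>x\<in>X. p) * (\<Prod>x\<in>U - X. 1 - p))"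
    by (rule prod_add[OF assms])
  then show ?thesis unfolding bernoulli_weight_def by simp
qed

lemma coin_prob_nonneg: "0 \<le> p \<Longrightarrow> p \<le> 1 \<Longrightarrow> 0 \<le> coin_prob p U A"
  unfolding coin_prob_def bernoulli_weight_def by (intro sum_nonneg) simp

lemma coin_prob_mono:
  assumes "0 \<le> p" "p \<le> 1" "\<And>E. E \<subseteq> U \<Longrightarrow> A E \<Longrightarrow> B E"
  shows "coin_prob p U A \<le> coin_prob p U B"
  unfolding coin_prob_def bernoulli_weight_def using assms by (intro sum_mono) auto

lemma coin_prob_Not:
  assumes "finite U"
  shows "coin_prob p U (\<lambda>E. \<not> A E) = 1 - coin_prob p U A"
proof -
  have "coin_prob p U (\<lambda>E. \<not> A E) + coin_prob p U A = (\<Sum>E\<in>Pow U. bernoulli_weight p U E)"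
    unfolding coin_prob_def sum.distrib[symmetric] by (intro sum.cong) auto
  then show ?thesis using sum_bernoulli_weight[OF assms] by simp
qed

lemma coin_prob_disj:
  "coin_prob p U (\<lambda>E. A E \<or> B E) = coin_prob p U A + coin_prob p U B - coin_prob p U (\<lambda>E. A E \<and> B E)"
  unfolding coin_prob_def sum.distrib[symmetric] sum_subtractf[symmetric] by (intro sum.cong) auto

lemma coin_prob_disj_le:
  assumes "0 \<le> p" "p \<le> 1"
  shows "coin_prob p U (\<lambda>E. A E \<or> B E) \<le> coin_prob p U A + coin_prob p U B"
  using coin_prob_disj[of p U A B] coin_prob_nonneg[OF assms, of U "\<lambda>E. A E \<and> B E"] by linarith

lemma coin_prob_Bex_le:
  assumes "0 \<le> p" "p \<le> 1" "finite I"
  shows "coin_prob p U (\<lambda>E. \<exists>i\<in>I. A i E) \<le> (\<Sum>i\<in>I. coin_prob p U (A i))"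
  using assms(3)
proof (induction I rule: finite_induct)
  case empty
  then show ?case unfolding coin_prob_def by simp
next
  case (insert x F)
  have "coin_prob p U (\<lambda>E. \<exists>i\<in>insert x F. A i E) = coin_prob p U (\<lambda>E. A x E \<or> (\<exists>i\<in>F. A i E))"
    by simp
  also have "\<dots> \<le> coin_prob p U (A x) + coin_prob p U (\<lambda>E. \<exists>i\<in>F. A i E)"
    by (rule coin_prob_disj_le[OF assms(1,2)])
  finally show ?case using insert by simp
qed

lemma coin_prob_restrict:
  assumes "finite U" "S \<subseteq> U" "\<And>E. E \<subseteq> U \<Longrightarrow> A E = A (E \<inter> S)"
  shows "coin_prob p U A = coin_prob p S A"
proof -
  have fS: "finite S" using assms finite_subset by auto
  have US: "S \<union> (U - S) = U" using assms by auto
  have "coin_prob p U A = (\<Sum>E\<in>Pow (S \<union> (U - S)).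
      bernoulli_weight p (S \<union> (U - S)) E * (if A (E \<inter> S) then 1 else 0) * (\<lambda>_. 1) (E \<inter> (U - S)))"
    unfolding coin_prob_def US using assms(3) by (intro sum.cong) auto
  also have "\<dots> = coin_prob p S A"
    unfolding coin_prob_def using fS assms
    by (subst sum_Pow_Un_bernoulli_weight) (auto intro!: sum.cong simp: sum_bernoulli_weight)
  finally show ?thesis .
qed

lemma coin_prob_superset:
  assumes "finite U" "S \<subseteq> U"
  shows "coin_prob p U (\<lambda>E. S \<subseteq> E) = p ^ card S"
proof -
  have "coin_prob p U (\<lambda>E. S \<subseteq> E) = coin_prob p S (\<lambda>E. S \<subseteq> E)"
    by (rule coin_prob_restrict[OF assms]) auto
  also have "\<dots> = (\<Sum>E\<in>Pow S. if E = S then bernoulli_weight p S S else 0)"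
    unfolding coin_prob_def by (intro sum.cong) auto
  finally show ?thesis using finite_subset[OF assms(2,1)] unfolding bernoulli_weight_def by simp
qed

lemma coin_prob_superset_disj:
  assumes "finite S1" "finite S2" "S1 \<inter> S2 = {}" "card S1 = m" "card S2 = m"
  shows "coin_prob p (S1 \<union> S2) (\<lambda>E. S1 \<subseteq> E \<or> S2 \<subseteq> E) = 1 - (1 - p ^ m)\<^sup>2"
proof -
  have fin: "finite (S1 \<union> S2)" using assms(1,2) by simp
  have "card (S1 \<union> S2) = 2 * m" using assms by (simp add: card_Un_disjoint)
  then have "coin_prob p (S1 \<union> S2) (\<lambda>E. S1 \<subseteq> E \<or> S2 \<subseteq> E) = p ^ m + p ^ m - p ^ (2 * m)"
    unfolding coin_prob_disj
    using coin_prob_superset[OF fin, of S1 p] coin_prob_superset[OF fin, of S2 p]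
      coin_prob_superset[OF fin, of "S1 \<union> S2" p] assms(4,5) by simp
  also have "\<dots> = 1 - (1 - p ^ m)\<^sup>2" by (simp add: power2_eq_square power_mult algebra_simps)
  finally show ?thesis .
qed

lemma coin_prob_avoid:
  assumes "finite U" "S \<subseteq> U"
  shows "coin_prob p U (\<lambda>E. \<forall>e\<in>S. e \<notin> E) = (1 - p) ^ card S"
proof -
  have "coin_prob p U (\<lambda>E. \<forall>e\<in>S. e \<notin> E) = coin_prob p S (\<lambda>E. \<forall>e\<in>S. e \<notin> E)"
    by (rule coin_prob_restrict[OF assms]) auto
  also have "\<dots> = (\<Sum>E\<in>Pow S. if E = {} then bernoulli_weight p S {} else 0)"
    unfolding coin_prob_def by (intro sum.cong) auto
  finally show ?thesis using finite_subset[OF assms(2,1)] unfolding bernoulli_weight_def by simp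
qed

lemma coin_prob_le_avoid_some:
  fixes p :: real
  assumes "0 \<le> p" "p \<le> 1" "finite U" "finite X" "card X \<le> N"
    and "\<forall>x\<in>X. S x \<subseteq> U \<and> card (S x) = k"
    and "\<And>E. E \<subseteq> U \<Longrightarrow> A E \<Longrightarrow> \<exists>x\<in>X. \<forall>e\<in>S x. e \<notin> E"
  shows "coin_prob p U A \<le> N * (1 - p) ^ k"
proof -
  have "coin_prob p U A \<le> coin_prob p U (\<lambda>E. \<exists>x\<in>X. \<forall>e\<in>S x. e \<notin> E)"
    using assms(7) by (rule coin_prob_mono[OF assms(1,2)])
  also have "\<dots> \<le> (\<Sum>x\<in>X. coin_prob p U (\<lambda>E. \<forall>e\<in>S x. e \<notin> E))"
    by (rule coin_prob_Bex_le[OF assms(1,2,4)])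
  also have "\<dots> = (\<Sum>x\<in>X. (1 - p) ^ k)"
    using assms(3,6) by (intro sum.cong) (auto simp: coin_prob_avoid)
  also have "\<dots> = card X * (1 - p) ^ k" by simp
  also have "\<dots> \<le> N * (1 - p) ^ k"
    using assms(1,2,5) by (intro mult_right_mono) auto
  finally show ?thesis .
qed

lemma coin_prob_Ball_disjoint_Union:
  assumes "finite I" "\<forall>i\<in>I. finite (S i)"
    and "\<forall>i\<in>I. \<forall>j\<in>I. i \<noteq> j \<longrightarrow> S i \<inter> S j = {}"
    and "\<forall>i\<in>I. \<forall>E. A i E = A i (E \<inter> S i)"
  shows "coin_prob p (\<Union>i\<in>I. S i) (\<lambda>E. \<forall>i\<in>I. A i E) = (\<Prod>i\<in>I. coin_prob p (S i) (A i))"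
  using assms
proof (induction I rule: finite_induct)
  case empty
  then show ?case unfolding coin_prob_def bernoulli_weight_def by simp
next
  case (insert j I)
  define R where "R = (\<Union>i\<in>I. S i)"
  have fR: "finite R" unfolding R_def using insert.prems(1) insert.hyps(1) by blast
  have fj: "finite (S j)" using insert.prems(1) by blast
  have "S j \<inter> S i = {}" if "i \<in> I" for i
    using insert.prems(2) insert.hyps(2) that by (metis insertCI)
  then have dj: "S j \<inter> R = {}" unfolding R_def by blast
  have local_R: "A i E = A i (E \<inter> R)" if "i \<in> I" for i E
  proof -
    have "E \<inter> S i = (E \<inter> R) \<inter> S i" unfolding R_def using that by auto
    then show ?thesis using insert.prems(3) that by (metis insertCI)
  qed
  have local_j: "A j E = A j (E \<inter> S j)" for E using insert.prems(3) by blast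
  have "(\<forall>i\<in>insert j I. A i E) \<longleftrightarrow> A j (E \<inter> S j) \<and> (\<forall>i\<in>I. A i (E \<inter> R))" for E
    using local_R local_j by blast
  then have split: "(if \<forall>i\<in>insert j I. A i E then 1 else 0 :: real)
      = (if A j (E \<inter> S j) then 1 else 0) * (if \<forall>i\<in>I. A i (E \<inter> R) then 1 else 0)" for E
    by simp
  have "coin_prob p (S j \<union> R) (\<lambda>E. \<forall>i\<in>insert j I. A i E)
      = (\<Sum>E\<in>Pow (S j \<union> R). bernoulli_weight p (S j \<union> R) E
           * (if A j (E \<inter> S j) then 1 else 0) * (if \<forall>i\<in>I. A i (E \<inter> R) then 1 else 0))"
    unfolding coin_prob_def by (intro sum.cong refl) (simp only: split mult.assoc)
  also have "\<dots> = coin_prob p (S j) (A j) * coin_prob p R (\<lambda>E. \<forall>i\<in>I. A i E)"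
    unfolding coin_prob_def by (rule sum_Pow_Un_bernoulli_weight[OF fj fR dj])
  also have "coin_prob p R (\<lambda>E. \<forall>i\<in>I. A i E) = (\<Prod>i\<in>I. coin_prob p (S i) (A i))"
    unfolding R_def
  proof (rule insert.IH)
    show "\<forall>i\<in>I. finite (S i)" using insert.prems(1) by blast
    show "\<forall>i\<in>I. \<forall>j\<in>I. i \<noteq> j \<longrightarrow> S i \<inter> S j = {}" using insert.prems(2) by blast
    show "\<forall>i\<in>I. \<forall>E. A i E = A i (E \<inter> S i)" using insert.prems(3) by blast
  qed
  finally show ?case using insert.hyps unfolding R_def by simp
qed

lemma coin_prob_Ball_indep:
  assumes "finite U" "finite I" "\<forall>i\<in>I. S i \<subseteq> U"
    and disj: "\<forall>i\<in>I. \<forall>j\<in>I. i \<noteq> j \<longrightarrow> S i \<inter> S j = {}"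
    and local: "\<forall>i\<in>I. \<forall>E. A i E = A i (E \<inter> S i)"
  shows "coin_prob p U (\<lambda>E. \<forall>i\<in>I. A i E) = (\<Prod>i\<in>I. coin_prob p (S i) (A i))"
proof -
  have "coin_prob p U (\<lambda>E. \<forall>i\<in>I. A i E) = coin_prob p (\<Union>i\<in>I. S i) (\<lambda>E. \<forall>i\<in>I. A i E)"
  proof (rule coin_prob_restrict)
    fix E
    have "A i E = A i (E \<inter> (\<Union>i\<in>I. S i))" if "i \<in> I" for i
    proof -
      have "E \<inter> S i = (E \<inter> (\<Union>i\<in>I. S i)) \<inter> S i" using that by auto
      then show ?thesis using local that by metis
    qed
    then show "(\<forall>i\<in>I. A i E) = (\<forall>i\<in>I. A i (E \<inter> (\<Union>i\<in>I. S i)))" by auto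
  qed (use assms(1,3) in auto)
  also have "\<dots> = (\<Prod>i\<in>I. coin_prob p (S i) (A i))"
    using assms(1,3) finite_subset by (intro coin_prob_Ball_disjoint_Union[OF assms(2) _ disj local]) blast
  finally show ?thesis .
qed

lemma finite_all_edges: "finite (all_edges n)"
proof -
  have "all_edges n \<subseteq> Pow {0..<n}" unfolding all_edges_def by auto
  then show ?thesis by (rule finite_subset) simp
qed

lemma doubleton_in_all_edges: "x < n \<Longrightarrow> y < n \<Longrightarrow> x \<noteq> y \<Longrightarrow> {x, y} \<in> all_edges n"
  unfolding all_edges_def by auto

lemma prob_Gnp_eq_coin_prob: "prob_Gnp n p A = coin_prob p (all_edges n) A"
proof -
  have "{E. E \<subseteq> all_edges n \<and> A E} = {E \<in> Pow (all_edges n). A E}" by auto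
  then have "prob_Gnp n p A = (\<Sum>E\<in>{E \<in> Pow (all_edges n). A E}.
      p ^ card E * (1 - p) ^ (card (all_edges n) - card E))"
    unfolding prob_Gnp_def by simp
  also have "\<dots> = (\<Sum>E\<in>Pow (all_edges n).
      if A E then p ^ card E * (1 - p) ^ (card (all_edges n) - card E) else 0)"
    by (rule sum.inter_filter) (simp add: finite_all_edges)
  also have "\<dots> = coin_prob p (all_edges n) A"
    unfolding coin_prob_def bernoulli_weight_def
    by (intro sum.cong refl) (auto simp: card_Diff_subset finite_all_edges finite_subset)
  finally show ?thesis .
qed

section \<open>Planar diameter graphs contain no 4-cycle\<close>

text \<open>Equal sides force \<open>abcd\<close> to be a parallelogram (the cross product \<open>cr\<close> vanishes), and the
  parallelogram law then gives \<open>|ac|\<^sup>2 + |bd|\<^sup>2 = 4D\<close>.\<close>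
lemma no_rhombus_with_short_diagonals:
  fixes a1 a2 b1 b2 c1 c2 d1 d2 D :: real
  assumes ab: "(a1 - b1)\<^sup>2 + (a2 - b2)\<^sup>2 = D" and bc: "(b1 - c1)\<^sup>2 + (b2 - c2)\<^sup>2 = D"
    and cd: "(c1 - d1)\<^sup>2 + (c2 - d2)\<^sup>2 = D" and da: "(d1 - a1)\<^sup>2 + (d2 - a2)\<^sup>2 = D"
    and ac: "(a1 - c1)\<^sup>2 + (a2 - c2)\<^sup>2 \<le> D" and bd: "(b1 - d1)\<^sup>2 + (b2 - d2)\<^sup>2 \<le> D"
    and ac0: "(a1 - c1)\<^sup>2 + (a2 - c2)\<^sup>2 \<noteq> 0" and bd0: "(b1 - d1)\<^sup>2 + (b2 - d2)\<^sup>2 \<noteq> 0"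
  shows False
proof -
  define x1 x2 y1 y2 z1 z2 where "x1 = b1 - a1" "x2 = b2 - a2" "y1 = d1 - a1" "y2 = d2 - a2"
    "z1 = c1 - a1" "z2 = c2 - a2"
  define w1 w2 s1 s2 where "w1 = x1 - y1" "w2 = x2 - y2" "s1 = x1 + y1" "s2 = x2 + y2"
  note defs = x1_x2_y1_y2_z1_z2_def w1_w2_s1_s2_def
  have hx: "x1\<^sup>2 + x2\<^sup>2 = D" and hy: "y1\<^sup>2 + y2\<^sup>2 = D"
    and hxz: "(x1 - z1)\<^sup>2 + (x2 - z2)\<^sup>2 = D" and hyz: "(y1 - z1)\<^sup>2 + (y2 - z2)\<^sup>2 = D"
    and hz: "z1\<^sup>2 + z2\<^sup>2 \<le> D" and hz0: "z1\<^sup>2 + z2\<^sup>2 \<noteq> 0"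
    using ab da bc cd ac ac0 unfolding defs by (simp_all add: power2_commute)
  have hw: "w1\<^sup>2 + w2\<^sup>2 \<le> D" and hw0: "w1\<^sup>2 + w2\<^sup>2 \<noteq> 0"
    using bd bd0 unfolding defs by (simp_all add: algebra_simps power2_eq_square)
  have wz: "w1 * z1 + w2 * z2 = 0" and ws: "w1 * s1 + w2 * s2 = 0"
    and sz: "s1 * z1 + s2 * z2 = z1\<^sup>2 + z2\<^sup>2"
    using hx hy hxz hyz unfolding w1_w2_s1_s2_def by (simp_all add: power2_eq_square algebra_simps)
  define cr where "cr = z1 * s2 - z2 * s1"
  have "w1 * cr = s2 * (w1 * z1 + w2 * z2) - z2 * (w1 * s1 + w2 * s2)"
    and "w2 * cr = z1 * (w1 * s1 + w2 * s2) - s1 * (w1 * z1 + w2 * z2)"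
    unfolding cr_def by (simp_all add: algebra_simps)
  moreover have "w1 \<noteq> 0 \<or> w2 \<noteq> 0" using hw0 by auto
  ultimately have cr0: "cr = 0" using wz ws by auto
  have "(s1 * z1 + s2 * z2)\<^sup>2 + cr\<^sup>2 = (s1\<^sup>2 + s2\<^sup>2) * (z1\<^sup>2 + z2\<^sup>2)"
    unfolding cr_def by (simp add: power2_eq_square algebra_simps)
  then have "(z1\<^sup>2 + z2\<^sup>2) * (z1\<^sup>2 + z2\<^sup>2) = (s1\<^sup>2 + s2\<^sup>2) * (z1\<^sup>2 + z2\<^sup>2)"
    using sz cr0 by (simp add: power2_eq_square)
  then have ss: "s1\<^sup>2 + s2\<^sup>2 = z1\<^sup>2 + z2\<^sup>2" using hz0 by (metis mult_right_cancel)
  have "(s1\<^sup>2 + s2\<^sup>2) + (w1\<^sup>2 + w2\<^sup>2) = 4 * D"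
    using hx hy unfolding w1_w2_s1_s2_def by (simp add: power2_eq_square algebra_simps)
  moreover have "0 < z1\<^sup>2 + z2\<^sup>2" using hz0 by (simp add: sum_power2_gt_zero_iff)
  ultimately show False using ss hz hw by linarith
qed

lemma edist_2: "edist 2 x y = sqrt ((x 0 - y 0)\<^sup>2 + (x 1 - y 1)\<^sup>2)"
  by (simp add: edist_def numeral_2_eq_2)

lemma edist_commute: "edist d x y = edist d y x"
  unfolding edist_def by (simp add: power2_commute)

lemma edist_self: "edist d x x = 0"
  unfolding edist_def by simp

lemma diameter_graph_2_no_C4:
  assumes dg: "is_diameter_graph 2 W F"
    and W: "a \<in> W" "b \<in> W" "c \<in> W" "d \<in> W" and neq: "a \<noteq> c" "b \<noteq> d"
    and F: "{a, b} \<in> F" "{b, c} \<in> F" "{c, d} \<in> F" "{d, a} \<in> F"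
  shows False
proof -
  obtain f where inj: "\<forall>u\<in>W. \<forall>v\<in>W. u \<noteq> v \<longrightarrow> edist 2 (f u) (f v) \<noteq> 0"
    and F_eq: "F = {{u, v} | u v. u \<in> W \<and> v \<in> W \<and> u \<noteq> v \<and>
               edist 2 (f u) (f v) = Max ((\<lambda>(a, b). edist 2 (f a) (f b)) ` (W \<times> W))}"
    and fin: "finite W"
    using dg unfolding is_diameter_graph_def by blast
  define M where "M = Max ((\<lambda>(a, b). edist 2 (f a) (f b)) ` (W \<times> W))"
  let ?s = "\<lambda>u v. (f u 0 - f v 0)\<^sup>2 + (f u 1 - f v 1)\<^sup>2"
  have sq: "edist 2 (f u) (f v) ^ 2 = ?s u v" for u v
    unfolding edist_2 by simp
  have le: "edist 2 (f u) (f v) \<le> M" if "u \<in> W" "v \<in> W" for u v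
    unfolding M_def using that fin by (intro Max_ge) force+
  have side: "?s u v = M\<^sup>2" if "{u, v} \<in> F" for u v
  proof -
    from that obtain u' v' where "{u, v} = {u', v'}" "edist 2 (f u') (f v') = M"
      unfolding F_eq M_def by blast
    then have "edist 2 (f u) (f v) = M" by (metis doubleton_eq_iff edist_commute)
    then show ?thesis using sq by metis
  qed
  have diag: "?s u v \<le> M\<^sup>2" if "u \<in> W" "v \<in> W" for u v
  proof -
    have "edist 2 (f u) (f v) ^ 2 \<le> M\<^sup>2"
      using le[OF that] by (intro power_mono) (simp_all add: edist_2)
    then show ?thesis using sq[of u v] by simp
  qed
  have nonzero: "?s u v \<noteq> 0" if "u \<in> W" "v \<in> W" "u \<noteq> v" for u v
    using inj that unfolding edist_2 by auto
  show False
    using no_rhombus_with_short_diagonals[OF side[OF F(1)] side[OF F(2)] side[OF F(3)] side[OF F(4)]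
        diag[OF W(1,3)] diag[OF W(2,4)] nonzero[OF W(1,3) neq(1)] nonzero[OF W(2,4) neq(2)]] .
qed

section \<open>No induced diameter graph on five vertices\<close>

text \<open>The prefix \<open>co\<close> refers to the complement of \<open>E\<close>: here a cycle of non-edges.\<close>
definition short_co_cycle :: "nat \<Rightarrow> nat set set \<Rightarrow> bool" where
  "short_co_cycle n E \<longleftrightarrow>
    (\<exists>a b c. a < n \<and> b < n \<and> c < n \<and> distinct [a, b, c] \<and>
       {a, b} \<notin> E \<and> {b, c} \<notin> E \<and> {c, a} \<notin> E) \<or>
    (\<exists>a b c d. a < n \<and> b < n \<and> c < n \<and> d < n \<and> distinct [a, b, c, d] \<and>
       {a, b} \<notin> E \<and> {b, c} \<notin> E \<and> {c, d} \<notin> E \<and> {d, a} \<notin> E) \<or>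
    (\<exists>a b c d e. a < n \<and> b < n \<and> c < n \<and> d < n \<and> e < n \<and> distinct [a, b, c, d, e] \<and>
       {a, b} \<notin> E \<and> {b, c} \<notin> E \<and> {c, d} \<notin> E \<and> {d, e} \<notin> E \<and> {e, a} \<notin> E)"

text \<open>A propositional problem in the ten atoms \<open>adj i j\<close>, \<open>i < j\<close>: every 3-, 4- and 5-cycle
  and every candidate 4-cycle on \<open>{0..4}\<close> is listed once, up to rotation and reflection.\<close>
lemma five_vertices_contain_C4:
  fixes adj :: "nat \<Rightarrow> nat \<Rightarrow> bool"
  assumes sym: "\<And>i j. adj i j = adj j i"
    and no_co_C3: "\<And>a b c. a < 5 \<Longrightarrow> b < 5 \<Longrightarrow> c < 5 \<Longrightarrow> distinct [a, b, c] \<Longrightarrow>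
        adj a b \<or> adj b c \<or> adj c a"
    and no_co_C4: "\<And>a b c d. a < 5 \<Longrightarrow> b < 5 \<Longrightarrow> c < 5 \<Longrightarrow> d < 5 \<Longrightarrow> distinct [a, b, c, d] \<Longrightarrow>
        adj a b \<or> adj b c \<or> adj c d \<or> adj d a"
    and no_co_C5: "\<And>a b c d e. a < 5 \<Longrightarrow> b < 5 \<Longrightarrow> c < 5 \<Longrightarrow> d < 5 \<Longrightarrow> e < 5 \<Longrightarrow>
        distinct [a, b, c, d, e] \<Longrightarrow> adj a b \<or> adj b c \<or> adj c d \<or> adj d e \<or> adj e a"
  shows "\<exists>a<5. \<exists>b<5. \<exists>c<5. \<exists>d<5. a \<noteq> c \<and> b \<noteq> d \<and> adj a b \<and> adj b c \<and> adj c d \<and> adj d a"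
proof (rule ccontr)
  assume "\<not> ?thesis"
  then have C4_free: "\<not> (adj a b \<and> adj b c \<and> adj c d \<and> adj d a)"
    if "a < 5" "b < 5" "c < 5" "d < 5" "a \<noteq> c" "b \<noteq> d" for a b c d
    using that by blast
  have sym_ground: "adj 1 0 = adj 0 1" "adj 2 0 = adj 0 2" "adj 3 0 = adj 0 3" "adj 4 0 = adj 0 4"
    "adj 2 1 = adj 1 2" "adj 3 1 = adj 1 3" "adj 4 1 = adj 1 4" "adj 3 2 = adj 2 3"
    "adj 4 2 = adj 2 4" "adj 4 3 = adj 3 4" using sym by blast+
  show False
    using no_co_C3[of 0 1 2] no_co_C3[of 0 1 3] no_co_C3[of 0 1 4] no_co_C3[of 0 2 3] no_co_C3[of 0 2 4]
      no_co_C3[of 0 3 4] no_co_C3[of 1 2 3] no_co_C3[of 1 2 4] no_co_C3[of 1 3 4] no_co_C3[of 2 3 4]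
      no_co_C4[of 0 1 2 3] no_co_C4[of 0 1 3 2] no_co_C4[of 0 2 1 3] no_co_C4[of 0 1 2 4]
      no_co_C4[of 0 1 4 2] no_co_C4[of 0 2 1 4] no_co_C4[of 0 1 3 4] no_co_C4[of 0 1 4 3]
      no_co_C4[of 0 3 1 4] no_co_C4[of 0 2 3 4] no_co_C4[of 0 2 4 3] no_co_C4[of 0 3 2 4]
      no_co_C4[of 1 2 3 4] no_co_C4[of 1 2 4 3] no_co_C4[of 1 3 2 4]
      no_co_C5[of 0 1 2 3 4] no_co_C5[of 0 1 2 4 3] no_co_C5[of 0 1 3 2 4] no_co_C5[of 0 1 3 4 2]
      no_co_C5[of 0 1 4 2 3] no_co_C5[of 0 1 4 3 2] no_co_C5[of 0 2 1 3 4] no_co_C5[of 0 2 1 4 3]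
      no_co_C5[of 0 2 3 1 4] no_co_C5[of 0 2 4 1 3] no_co_C5[of 0 3 1 2 4] no_co_C5[of 0 3 2 1 4]
      C4_free[of 0 1 2 3] C4_free[of 0 1 3 2] C4_free[of 0 2 1 3] C4_free[of 0 1 2 4]
      C4_free[of 0 1 4 2] C4_free[of 0 2 1 4] C4_free[of 0 1 3 4] C4_free[of 0 1 4 3]
      C4_free[of 0 3 1 4] C4_free[of 0 2 3 4] C4_free[of 0 2 4 3] C4_free[of 0 3 2 4]
      C4_free[of 1 2 3 4] C4_free[of 1 2 4 3] C4_free[of 1 3 2 4]
    by (simp only: sym_ground rel_simps distinct.simps list.set insert_iff empty_iff simp_thms) sat
qed

lemma C4_among_five_vertices:
  assumes no_cycle: "\<not> short_co_cycle n E"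
    and xs: "distinct xs" "length xs = 5" "set xs \<subseteq> {0..<n}"
  shows "\<exists>a<5. \<exists>b<5. \<exists>c<5. \<exists>d<5. a \<noteq> c \<and> b \<noteq> d \<and>
    {xs ! a, xs ! b} \<in> E \<and> {xs ! b, xs ! c} \<in> E \<and> {xs ! c, xs ! d} \<in> E \<and> {xs ! d, xs ! a} \<in> E"
proof -
  have below_n: "xs ! i < n" if "i < 5" for i
  proof -
    have "xs ! i \<in> set xs" using that xs(2) by simp
    then show ?thesis using xs(3) by auto
  qed
  have neq: "xs ! i \<noteq> xs ! j" if "i < 5" "j < 5" "i \<noteq> j" for i j
    using that xs(1,2) by (simp add: nth_eq_iff_index_eq)
  have co_C3: "\<not> ({a, b} \<notin> E \<and> {b, c} \<notin> E \<and> {c, a} \<notin> E)"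
    if "a < n" "b < n" "c < n" "distinct [a, b, c]" for a b c
    using no_cycle that unfolding short_co_cycle_def by blast
  have co_C4: "\<not> ({a, b} \<notin> E \<and> {b, c} \<notin> E \<and> {c, d} \<notin> E \<and> {d, a} \<notin> E)"
    if "a < n" "b < n" "c < n" "d < n" "distinct [a, b, c, d]" for a b c d
    using no_cycle that unfolding short_co_cycle_def by blast
  have co_C5: "\<not> ({a, b} \<notin> E \<and> {b, c} \<notin> E \<and> {c, d} \<notin> E \<and> {d, e} \<notin> E \<and> {e, a} \<notin> E)"
    if "a < n" "b < n" "c < n" "d < n" "e < n" "distinct [a, b, c, d, e]" for a b c d e
    using no_cycle that unfolding short_co_cycle_def by blast
  define adj where "adj i j \<longleftrightarrow> {xs ! i, xs ! j} \<in> E" for i j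
  have "\<exists>a<5. \<exists>b<5. \<exists>c<5. \<exists>d<5. a \<noteq> c \<and> b \<noteq> d \<and> adj a b \<and> adj b c \<and> adj c d \<and> adj d a"
  proof (rule five_vertices_contain_C4)
    show "adj i j = adj j i" for i j unfolding adj_def by (simp add: insert_commute)
  next
    fix a b c :: nat assume "a < 5" "b < 5" "c < 5" "distinct [a, b, c]"
    then show "adj a b \<or> adj b c \<or> adj c a"
      using co_C3[of "xs ! a" "xs ! b" "xs ! c"] below_n neq unfolding adj_def by auto
  next
    fix a b c d :: nat assume "a < 5" "b < 5" "c < 5" "d < 5" "distinct [a, b, c, d]"
    then show "adj a b \<or> adj b c \<or> adj c d \<or> adj d a"
      using co_C4[of "xs ! a" "xs ! b" "xs ! c" "xs ! d"] below_n neq unfolding adj_def by auto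
  next
    fix a b c d e :: nat assume "a < 5" "b < 5" "c < 5" "d < 5" "e < 5" "distinct [a, b, c, d, e]"
    then show "adj a b \<or> adj b c \<or> adj c d \<or> adj d e \<or> adj e a"
      using co_C5[of "xs ! a" "xs ! b" "xs ! c" "xs ! d" "xs ! e"] below_n neq unfolding adj_def by auto
  qed
  then show ?thesis unfolding adj_def .
qed

lemma not_good_set_if_card_ge_5:
  assumes no_cycle: "\<not> short_co_cycle n E" and W: "W \<subseteq> {0..<n}" and card: "5 \<le> card W"
  shows "\<not> good_set 2 E W"
proof
  assume "good_set 2 E W"
  then have dg: "is_diameter_graph 2 W (induced_edges E W)" unfolding good_set_def by simp
  obtain T where T: "T \<subseteq> W" "card T = 5" "finite T" using obtain_subset_with_card_n[OF card] by blast
  obtain xs where xs: "set xs = T" "distinct xs" using finite_distinct_list[OF T(3)] by blast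
  have len: "length xs = 5" using distinct_card[OF xs(2)] xs(1) T(2) by simp
  have in_W: "xs ! i \<in> W" if "i < 5" for i using nth_mem[of i xs] that len xs(1) T(1) by auto
  have neq: "xs ! i \<noteq> xs ! j" if "i < 5" "j < 5" "i \<noteq> j" for i j
    using that len xs(2) by (simp add: nth_eq_iff_index_eq)
  obtain a b c d where abcd: "a < 5" "b < 5" "c < 5" "d < 5" "a \<noteq> c" "b \<noteq> d"
    and edges: "{xs ! a, xs ! b} \<in> E" "{xs ! b, xs ! c} \<in> E" "{xs ! c, xs ! d} \<in> E" "{xs ! d, xs ! a} \<in> E"
    using C4_among_five_vertices[OF no_cycle xs(2) len] xs(1) T(1) W by blast
  have induced: "{xs ! i, xs ! j} \<in> induced_edges E W" if "{xs ! i, xs ! j} \<in> E" "i < 5" "j < 5" for i j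
    using that in_W unfolding induced_edges_def by simp
  show False
    by (rule diameter_graph_2_no_C4[OF dg in_W[OF abcd(1)] in_W[OF abcd(2)] in_W[OF abcd(3)]
          in_W[OF abcd(4)] neq[OF abcd(1,3,5)] neq[OF abcd(2,4,6)] induced[OF edges(1) abcd(1,2)]
          induced[OF edges(2) abcd(2,3)] induced[OF edges(3) abcd(3,4)] induced[OF edges(4) abcd(4,1)]])
qed

section \<open>The paw is a connected 3-chromatic planar diameter graph\<close>

lemma is_diameter_graph_of_two_distances:
  assumes W: "finite W" and F: "F \<noteq> {}" "F \<subseteq> {{x, y} |x y. x \<in> W \<and> y \<in> W \<and> x \<noteq> y}"
    and dist: "\<And>x y. x \<in> W \<Longrightarrow> y \<in> W \<Longrightarrow>
      edist d (f x) (f y) = (if x = y then 0 else if {x, y} \<in> F then D else r)"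
    and r: "0 < r" "r < D"
  shows "is_diameter_graph d W F"
proof -
  have max_eq: "Max ((\<lambda>(x, y). edist d (f x) (f y)) ` (W \<times> W)) = D"
  proof (rule Max_eqI)
    show "finite ((\<lambda>(x, y). edist d (f x) (f y)) ` (W \<times> W))" using W by simp
    show "s \<le> D" if "s \<in> (\<lambda>(x, y). edist d (f x) (f y)) ` (W \<times> W)" for s
      using that dist r by auto
    obtain e where "e \<in> F" using F(1) by blast
    moreover from this obtain x y where "e = {x, y}" "x \<in> W" "y \<in> W" "x \<noteq> y" using F(2) by blast
    ultimately show "D \<in> (\<lambda>(x, y). edist d (f x) (f y)) ` (W \<times> W)"
      using dist[of x y] by (auto intro!: image_eqI[of _ _ "(x, y)"])
  qed
  have edges: "F = {{u, w} |u w. u \<in> W \<and> w \<in> W \<and> u \<noteq> w \<and> edist d (f u) (f w) = D}"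
    (is "_ = ?E")
  proof (intro equalityI subsetI)
    fix e assume "e \<in> F"
    moreover from this obtain x y where "e = {x, y}" "x \<in> W" "y \<in> W" "x \<noteq> y" using F(2) by blast
    ultimately show "e \<in> ?E" using dist[of x y] by auto
  next
    fix e assume "e \<in> ?E"
    then obtain x y where "e = {x, y}" "x \<in> W" "y \<in> W" "x \<noteq> y" "edist d (f x) (f y) = D" by blast
    then show "e \<in> F" using dist[of x y] r by (auto split: if_splits)
  qed
  show ?thesis
    unfolding is_diameter_graph_def
  proof (intro conjI exI[of _ f])
    show "finite W" "W \<noteq> {}" using W F by auto
    show "\<forall>u\<in>W. \<forall>w\<in>W. u \<noteq> w \<longrightarrow> edist d (f u) (f w) \<noteq> 0"
      using dist r by auto
  qed (unfold max_eq, rule edges)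
qed

definition paw_edges :: "'a \<Rightarrow> 'a \<Rightarrow> 'a \<Rightarrow> 'a \<Rightarrow> 'a set set" where
  "paw_edges a v c d = {{a, c}, {d, a}, {d, v}, {d, c}}"

definition plane_point :: "real \<Rightarrow> real \<Rightarrow> nat \<Rightarrow> real" where
  "plane_point x y = (\<lambda>i. if i = 0 then x else y)"

lemma edist_plane_point: "edist 2 (plane_point x1 y1) (plane_point x2 y2) = sqrt ((x1 - x2)\<^sup>2 + (y1 - y2)\<^sup>2)"
  unfolding edist_2 plane_point_def by simp

text \<open>\<open>d\<close> sits at the origin, \<open>a\<close> and \<open>c\<close> form a unit equilateral triangle with it, and \<open>v\<close> is the
  unit point halfway between them in angle, at distance \<open>sqrt (2 - sqrt 3) < 1\<close> from both.\<close>
definition paw_hub :: "nat \<Rightarrow> real" where "paw_hub = plane_point 0 0"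
definition paw_right :: "nat \<Rightarrow> real" where "paw_right = plane_point (1/2) (sqrt 3 / 2)"
definition paw_left :: "nat \<Rightarrow> real" where "paw_left = plane_point (-1/2) (sqrt 3 / 2)"
definition paw_tip :: "nat \<Rightarrow> real" where "paw_tip = plane_point 0 1"

lemma sqrt_2_minus_sqrt_3_bounds: "0 < sqrt (2 - sqrt 3)" "sqrt (2 - sqrt 3) < 1"
proof -
  have "1 < sqrt (3::real)" "sqrt (3::real) < 2"
    by (simp_all add: real_less_rsqrt real_sqrt_less_iff[where y = 4, simplified])
  then show "0 < sqrt (2 - sqrt 3)" "sqrt (2 - sqrt 3) < 1" by simp_all
qed

lemma paw_point_distances:
  "edist 2 paw_hub paw_right = 1" "edist 2 paw_hub paw_left = 1" "edist 2 paw_hub paw_tip = 1"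
  "edist 2 paw_right paw_left = 1" "edist 2 paw_right paw_tip = sqrt (2 - sqrt 3)"
  "edist 2 paw_left paw_tip = sqrt (2 - sqrt 3)"
proof -
  have "(1/2 - 0)\<^sup>2 + (sqrt 3 / 2 - 1)\<^sup>2 = 2 - sqrt (3::real)"
    by (simp add: power2_diff power_divide algebra_simps)
  then show "edist 2 paw_right paw_tip = sqrt (2 - sqrt 3)"
    "edist 2 paw_left paw_tip = sqrt (2 - sqrt 3)"
    unfolding paw_right_def paw_left_def paw_tip_def edist_plane_point by simp_all
qed (simp_all add: paw_hub_def paw_right_def paw_left_def paw_tip_def edist_plane_point power_divide)

lemma paw_is_diameter_graph_2:
  assumes "distinct [a, v, c, d]"
  shows "is_diameter_graph 2 {a, v, c, d} (paw_edges a v c d)"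
proof (rule is_diameter_graph_of_two_distances)
  define f where "f x = (if x = d then paw_hub else if x = a then paw_right
     else if x = c then paw_left else paw_tip)" for x
  show "edist 2 (f x) (f y) =
      (if x = y then 0 else if {x, y} \<in> paw_edges a v c d then 1 else sqrt (2 - sqrt 3))"
    if "x \<in> {a, v, c, d}" "y \<in> {a, v, c, d}" for x y
  proof -
    have "x = a \<or> x = v \<or> x = c \<or> x = d" "y = a \<or> y = v \<or> y = c \<or> y = d"
      using that by auto
    then show ?thesis using assms unfolding f_def paw_edges_def
      by (elim disjE) (auto simp: paw_point_distances
          paw_point_distances[THEN edist_commute[THEN trans]] edist_self doubleton_eq_iff)
  qed
qed (use assms sqrt_2_minus_sqrt_3_bounds in \<open>auto simp: paw_edges_def\<close>)

lemma chromatic_number_paw: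
  assumes "distinct [a, v, c, d]"
  shows "chromatic_number {a, v, c, d} (paw_edges a v c d) = 3"
  unfolding chromatic_number_def
proof (rule Least_equality)
  define col where "col x = (if x = a then 0 else if x = c then 1 else if x = d then 2 else 0::nat)" for x
  show "\<exists>col :: 'a \<Rightarrow> nat. (\<forall>x\<in>{a, v, c, d}. col x < 3) \<and>
      (\<forall>u\<in>{a, v, c, d}. \<forall>w\<in>{a, v, c, d}. u \<noteq> w \<and> {u, w} \<in> paw_edges a v c d \<longrightarrow> col u \<noteq> col w)"
    using assms by (intro exI[of _ col]) (auto simp: col_def paw_edges_def doubleton_eq_iff)
next
  fix k :: nat
  assume "\<exists>col :: 'a \<Rightarrow> nat. (\<forall>x\<in>{a, v, c, d}. col x < k) \<and>
      (\<forall>u\<in>{a, v, c, d}. \<forall>w\<in>{a, v, c, d}. u \<noteq> w \<and> {u, w} \<in> paw_edges a v c d \<longrightarrow> col u \<noteq> col w)"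
  then obtain col :: "'a \<Rightarrow> nat" where "col a < k" "col c < k" "col d < k"
    and "col a \<noteq> col c" "col d \<noteq> col a" "col d \<noteq> col c"
    using assms unfolding paw_edges_def by (metis distinct_length_2_or_more insertCI)
  then show "3 \<le> k" by linarith
qed

lemma graph_connected_paw:
  assumes "distinct [a, v, c, d]"
  shows "graph_connected {a, v, c, d} (paw_edges a v c d)"
  unfolding graph_connected_def
proof (intro ballI)
  fix x y assume x: "x \<in> {a, v, c, d}" and y: "y \<in> {a, v, c, d}"
  let ?R = "\<lambda>x y. x \<in> {a, v, c, d} \<and> y \<in> {a, v, c, d} \<and> x \<noteq> y \<and> {x, y} \<in> paw_edges a v c d"
  have "?R\<^sup>*\<^sup>* u d" "?R\<^sup>*\<^sup>* d u" if "u \<in> {a, v, c, d}" for u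
    using that assms unfolding paw_edges_def by (auto simp: insert_commute intro: r_into_rtranclp)
  then show "?R\<^sup>*\<^sup>* x y" using x y by (meson rtranclp_trans)
qed

lemma induced_edges_paw:
  assumes "E \<subseteq> all_edges n" and "{v, a} \<notin> E" "{v, c} \<notin> E"
    and "{a, c} \<in> E" "{d, a} \<in> E" "{d, v} \<in> E" "{d, c} \<in> E"
  shows "induced_edges E {a, v, c, d} = paw_edges a v c d"
proof
  show "induced_edges E {a, v, c, d} \<subseteq> paw_edges a v c d"
  proof
    fix e assume "e \<in> induced_edges E {a, v, c, d}"
    then have "e \<in> E" "e \<subseteq> {a, v, c, d}" unfolding induced_edges_def by auto
    moreover from this obtain x y where "e = {x, y}" "x \<noteq> y"
      using assms(1) unfolding all_edges_def by blast
    ultimately show "e \<in> paw_edges a v c d"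
      using assms(2,3) unfolding paw_edges_def by (auto simp: insert_commute)
  qed
qed (use assms in \<open>auto simp: paw_edges_def induced_edges_def\<close>)

lemma good_set_paw:
  assumes "E \<subseteq> all_edges n" "distinct [a, v, c, d]" and "{v, a} \<notin> E" "{v, c} \<notin> E"
    and "{a, c} \<in> E" "{d, a} \<in> E" "{d, v} \<in> E" "{d, c} \<in> E"
  shows "good_set 2 E {a, v, c, d} \<and> graph_connected {a, v, c, d} (induced_edges E {a, v, c, d})"
  unfolding good_set_def induced_edges_paw[OF assms(1,3-)]
  using paw_is_diameter_graph_2[OF assms(2)] chromatic_number_paw[OF assms(2)]
    graph_connected_paw[OF assms(2)] by simp

lemma card_cycle_edges:
  "distinct [a, b, c] \<Longrightarrow> card {{a, b}, {b, c}, {c, a}} = 3"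
  "distinct [a, b, c, d] \<Longrightarrow> card {{a, b}, {b, c}, {c, d}, {d, a}} = 4"
  "distinct [a, b, c, d, e] \<Longrightarrow> card {{a, b}, {b, c}, {c, d}, {d, e}, {e, a}} = 5"
  by (auto simp: card_insert_if doubleton_eq_iff)

lemma coin_prob_co_triangle_le:
  fixes p :: real
  assumes p: "0 \<le> p" "p \<le> 1"
  shows "coin_prob p (all_edges n) (\<lambda>E. \<exists>a b c. a < n \<and> b < n \<and> c < n \<and> distinct [a, b, c] \<and>
      {a, b} \<notin> E \<and> {b, c} \<notin> E \<and> {c, a} \<notin> E) \<le> real (n ^ 3) * (1 - p) ^ 3"
proof -
  let ?X = "{(a, b, c). a < n \<and> b < n \<and> c < n \<and> distinct [a, b, c]}"
  have sub: "?X \<subseteq> {..<n} \<times> {..<n} \<times> {..<n}" by auto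
  have X: "finite ?X" "card ?X \<le> n ^ 3"
    using finite_subset[OF sub] card_mono[OF _ sub] by (simp_all add: card_cartesian_product numeral_eq_Suc)
  show ?thesis
  proof (rule coin_prob_le_avoid_some[OF p finite_all_edges X, where S = "\<lambda>(a, b, c). {{a, b}, {b, c}, {c, a}}"])
    fix E assume "\<exists>a b c. a < n \<and> b < n \<and> c < n \<and> distinct [a, b, c] \<and>
       {a, b} \<notin> E \<and> {b, c} \<notin> E \<and> {c, a} \<notin> E"
    then obtain a b c where "(a, b, c) \<in> ?X" "{a, b} \<notin> E" "{b, c} \<notin> E" "{c, a} \<notin> E" by auto
    then show "\<exists>x\<in>?X. \<forall>e\<in>(case x of (a, b, c) \<Rightarrow> {{a, b}, {b, c}, {c, a}}). e \<notin> E"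
      by (intro bexI[of _ "(a, b, c)"]) auto
  qed (clarsimp simp: doubleton_in_all_edges card_cycle_edges)
qed

lemma coin_prob_co_C4_le:
  fixes p :: real
  assumes p: "0 \<le> p" "p \<le> 1"
  shows "coin_prob p (all_edges n) (\<lambda>E. \<exists>a b c d. a < n \<and> b < n \<and> c < n \<and> d < n \<and>
      distinct [a, b, c, d] \<and> {a, b} \<notin> E \<and> {b, c} \<notin> E \<and> {c, d} \<notin> E \<and> {d, a} \<notin> E)
    \<le> real (n ^ 4) * (1 - p) ^ 4"
proof -
  let ?X = "{(a, b, c, d). a < n \<and> b < n \<and> c < n \<and> d < n \<and> distinct [a, b, c, d]}"
  have sub: "?X \<subseteq> {..<n} \<times> {..<n} \<times> {..<n} \<times> {..<n}" by auto
  have X: "finite ?X" "card ?X \<le> n ^ 4"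
    using finite_subset[OF sub] card_mono[OF _ sub] by (simp_all add: card_cartesian_product numeral_eq_Suc)
  show ?thesis
  proof (rule coin_prob_le_avoid_some[OF p finite_all_edges X,
        where S = "\<lambda>(a, b, c, d). {{a, b}, {b, c}, {c, d}, {d, a}}"])
    fix E assume "\<exists>a b c d. a < n \<and> b < n \<and> c < n \<and> d < n \<and>
       distinct [a, b, c, d] \<and> {a, b} \<notin> E \<and> {b, c} \<notin> E \<and> {c, d} \<notin> E \<and> {d, a} \<notin> E"
    then obtain a b c d where "(a, b, c, d) \<in> ?X" "{a, b} \<notin> E" "{b, c} \<notin> E" "{c, d} \<notin> E"
      "{d, a} \<notin> E" by auto
    then show "\<exists>x\<in>?X. \<forall>e\<in>(case x of (a, b, c, d) \<Rightarrow> {{a, b}, {b, c}, {c, d}, {d, a}}). e \<notin> E"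
      by (intro bexI[of _ "(a, b, c, d)"]) auto
  qed (clarsimp simp: doubleton_in_all_edges card_cycle_edges)
qed

lemma coin_prob_co_C5_le:
  fixes p :: real
  assumes p: "0 \<le> p" "p \<le> 1"
  shows "coin_prob p (all_edges n) (\<lambda>E. \<exists>a b c d e. a < n \<and> b < n \<and> c < n \<and> d < n \<and> e < n \<and>
      distinct [a, b, c, d, e] \<and> {a, b} \<notin> E \<and> {b, c} \<notin> E \<and> {c, d} \<notin> E \<and> {d, e} \<notin> E \<and> {e, a} \<notin> E)
    \<le> real (n ^ 5) * (1 - p) ^ 5"
proof -
  let ?X = "{(a, b, c, d, e). a < n \<and> b < n \<and> c < n \<and> d < n \<and> e < n \<and> distinct [a, b, c, d, e]}"
  have sub: "?X \<subseteq> {..<n} \<times> {..<n} \<times> {..<n} \<times> {..<n} \<times> {..<n}" by auto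
  have X: "finite ?X" "card ?X \<le> n ^ 5"
    using finite_subset[OF sub] card_mono[OF _ sub] by (simp_all add: card_cartesian_product numeral_eq_Suc)
  show ?thesis
  proof (rule coin_prob_le_avoid_some[OF p finite_all_edges X,
        where S = "\<lambda>(a, b, c, d, e). {{a, b}, {b, c}, {c, d}, {d, e}, {e, a}}"])
    fix E assume "\<exists>a b c d e. a < n \<and> b < n \<and> c < n \<and> d < n \<and> e < n \<and> distinct [a, b, c, d, e] \<and>
       {a, b} \<notin> E \<and> {b, c} \<notin> E \<and> {c, d} \<notin> E \<and> {d, e} \<notin> E \<and> {e, a} \<notin> E"
    then obtain a b c d e where "(a, b, c, d, e) \<in> ?X" "{a, b} \<notin> E" "{b, c} \<notin> E" "{c, d} \<notin> E"
      "{d, e} \<notin> E" "{e, a} \<notin> E" by auto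
    then show "\<exists>x\<in>?X. \<forall>e'\<in>(case x of (a, b, c, d, e) \<Rightarrow> {{a, b}, {b, c}, {c, d}, {d, e}, {e, a}}).
        e' \<notin> E"
      by (intro bexI[of _ "(a, b, c, d, e)"]) auto
  qed (clarsimp simp: doubleton_in_all_edges card_cycle_edges)
qed

lemma coin_prob_short_co_cycle_le:
  fixes p :: real
  assumes p: "0 \<le> p" "p \<le> 1"
  shows "coin_prob p (all_edges n) (short_co_cycle n)
    \<le> (real n * (1 - p)) ^ 3 + (real n * (1 - p)) ^ 4 + (real n * (1 - p)) ^ 5"
proof -
  have union3: "coin_prob p (all_edges n) (\<lambda>E. P3 E \<or> P4 E \<or> P5 E)
      \<le> coin_prob p (all_edges n) P3 + coin_prob p (all_edges n) P4 + coin_prob p (all_edges n) P5"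
    for P3 P4 P5
    using coin_prob_disj_le[OF p, of "all_edges n" P3 "\<lambda>E. P4 E \<or> P5 E"]
      coin_prob_disj_le[OF p, of "all_edges n" P4 P5] by linarith
  have "coin_prob p (all_edges n) (short_co_cycle n)
      \<le> real (n ^ 3) * (1 - p) ^ 3 + real (n ^ 4) * (1 - p) ^ 4 + real (n ^ 5) * (1 - p) ^ 5"
    unfolding short_co_cycle_def
    by (rule order.trans[OF union3])
      (use coin_prob_co_triangle_le[OF p, where n = n] coin_prob_co_C4_le[OF p, where n = n]
        coin_prob_co_C5_le[OF p, where n = n] in linarith)
  then show ?thesis by (simp add: power_mult_distrib)
qed

definition high_co_degree :: "nat \<Rightarrow> nat \<Rightarrow> nat set set \<Rightarrow> bool" where
  "high_co_degree n t E \<longleftrightarrow> (\<exists>x<n. t \<le> card {y. y < n \<and> y \<noteq> x \<and> {x, y} \<notin> E})"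

lemma coin_prob_high_co_degree_le:
  fixes p :: real
  assumes p: "0 \<le> p" "p \<le> 1"
  shows "coin_prob p (all_edges n) (high_co_degree n t) \<le> real n * (real n * (1 - p)) ^ t"
proof -
  define X where "X = Sigma {..<n} (\<lambda>x. {T. T \<subseteq> {0..<n} - {x} \<and> card T = t})"
  define S where "S = (\<lambda>(x, T). (\<lambda>y. {x, y :: nat}) ` T)"
  have fin_X: "finite X" unfolding X_def by (intro finite_SigmaI) auto
  have "card X = (\<Sum>x<n. (n - 1) choose t)"
    unfolding X_def by (subst card_SigmaI) (auto simp: n_subsets)
  also have "\<dots> \<le> n * n ^ t"
  proof -
    have "(n - 1) choose t \<le> (n - 1) ^ t"
      by (cases "t \<le> n - 1") (auto simp: binomial_le_pow binomial_eq_0)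
    also have "\<dots> \<le> n ^ t" by (intro power_mono) auto
    finally show ?thesis by simp
  qed
  finally have card_X: "card X \<le> n * n ^ t" .
  have S_X: "\<forall>z\<in>X. S z \<subseteq> all_edges n \<and> card (S z) = t"
  proof
    fix z assume "z \<in> X"
    then obtain x T where z: "z = (x, T)" "x < n" "T \<subseteq> {0..<n} - {x}" "card T = t"
      unfolding X_def by auto
    moreover have "inj_on (\<lambda>y. {x, y}) T"
      using z(3) by (intro inj_onI) (auto simp: doubleton_eq_iff)
    ultimately show "S z \<subseteq> all_edges n \<and> card (S z) = t"
      unfolding S_def by (auto simp: card_image intro!: doubleton_in_all_edges)
  qed
  have "coin_prob p (all_edges n) (high_co_degree n t) \<le> real (n * n ^ t) * (1 - p) ^ t"
  proof (rule coin_prob_le_avoid_some[OF p finite_all_edges fin_X card_X S_X])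
    fix E assume "high_co_degree n t E"
    then obtain x where x: "x < n" "t \<le> card {y. y < n \<and> y \<noteq> x \<and> {x, y} \<notin> E}"
      unfolding high_co_degree_def by blast
    obtain T where "T \<subseteq> {y. y < n \<and> y \<noteq> x \<and> {x, y} \<notin> E}" "card T = t"
      by (rule obtain_subset_with_card_n[OF x(2)])
    then have "(x, T) \<in> X" "\<forall>e\<in>S (x, T). e \<notin> E" using x unfolding X_def S_def by auto
    then show "\<exists>z\<in>X. \<forall>e\<in>S z. e \<notin> E" by blast
  qed
  then show ?thesis by (simp add: power_mult_distrib)
qed

text \<open>Splitting the candidates into three blocks makes the events for different \<open>v\<close> depend on
  disjoint sets of edges.\<close>
definition co_cherry :: "nat \<Rightarrow> nat set set \<Rightarrow> bool" where
  "co_cherry m E \<longleftrightarrow>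
    (\<exists>v<m. (\<exists>w\<in>{m..<2 * m}. {v, w} \<notin> E) \<and> (\<exists>w\<in>{2 * m..<3 * m}. {v, w} \<notin> E))"

lemma coin_prob_no_co_cherry:
  fixes p :: real
  assumes "3 * m \<le> n"
  shows "coin_prob p (all_edges n) (\<lambda>E. \<not> co_cherry m E) = (1 - (1 - p ^ m)\<^sup>2) ^ m"
proof -
  define S1 where "S1 v = (\<lambda>w. {v, w}) ` {m..<2 * m}" for v :: nat
  define S2 where "S2 v = (\<lambda>w. {v, w}) ` {2 * m..<3 * m}" for v :: nat
  define A where "A v E \<longleftrightarrow> S1 v \<subseteq> E \<or> S2 v \<subseteq> E" for v E
  have "\<not> co_cherry m E \<longleftrightarrow> (\<forall>v\<in>{..<m}. A v E)" for E
    unfolding co_cherry_def A_def S1_def S2_def by auto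
  then have "coin_prob p (all_edges n) (\<lambda>E. \<not> co_cherry m E)
      = coin_prob p (all_edges n) (\<lambda>E. \<forall>v\<in>{..<m}. A v E)"
    by simp
  also have "\<dots> = (\<Prod>v\<in>{..<m}. coin_prob p (S1 v \<union> S2 v) (A v))"
  proof (rule coin_prob_Ball_indep[OF finite_all_edges])
    show "\<forall>v\<in>{..<m}. S1 v \<union> S2 v \<subseteq> all_edges n"
      unfolding S1_def S2_def using assms by (auto intro!: doubleton_in_all_edges)
    show "\<forall>i\<in>{..<m}. \<forall>j\<in>{..<m}. i \<noteq> j \<longrightarrow> (S1 i \<union> S2 i) \<inter> (S1 j \<union> S2 j) = {}"
      unfolding S1_def S2_def by (auto simp: doubleton_eq_iff)
    show "\<forall>i\<in>{..<m}. \<forall>E. A i E = A i (E \<inter> (S1 i \<union> S2 i))" unfolding A_def by blast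
  qed simp
  also have "\<dots> = (\<Prod>v\<in>{..<m}. 1 - (1 - p ^ m)\<^sup>2)"
  proof (rule prod.cong[OF refl])
    fix v assume "v \<in> {..<m}"
    then have "inj_on (\<lambda>w. {v, w}) {m..<2 * m}" "inj_on (\<lambda>w. {v, w}) {2 * m..<3 * m}"
      and "S1 v \<inter> S2 v = {}"
      unfolding S1_def S2_def by (auto intro!: inj_onI simp: doubleton_eq_iff)
    then show "coin_prob p (S1 v \<union> S2 v) (A v) = 1 - (1 - p ^ m)\<^sup>2"
      unfolding A_def by (intro coin_prob_superset_disj) (simp_all add: S1_def S2_def card_image)
  qed
  finally show ?thesis by simp
qed

text \<open>With \<open>x = m q \<le> 1\<close>: \<open>(1 - q)\<^sup>m \<le> e\<^sup>-\<^sup>x \<le> 1/(1 + x)\<close>, so \<open>1 - (1 - q)\<^sup>m \<ge> x/2\<close>.\<close>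
lemma no_co_cherry_bound:
  fixes q :: real and m :: nat
  assumes q: "0 \<le> q" "q \<le> 1" and mq: "m * q \<le> 1"
  shows "(1 - (1 - (1 - q) ^ m)\<^sup>2) ^ m \<le> exp (- (real m ^ 3 * q\<^sup>2 / 4))"
proof -
  define x where "x = real m * q"
  have x: "0 \<le> x" "x \<le> 1" unfolding x_def using q mq by simp_all
  have "(1 - q) ^ m \<le> exp (- q) ^ m"
    using exp_ge_add_one_self[of "- q"] q by (intro power_mono) auto
  also have "\<dots> = exp (- x)" unfolding x_def using exp_of_nat_mult[of m "- q"] by simp
  also have "\<dots> \<le> 1 / (1 + x)"
  proof -
    have "1 / exp x \<le> 1 / (1 + x)"
      using x exp_ge_add_one_self[of x] by (intro divide_left_mono) auto
    then show ?thesis by (simp add: exp_minus field_simps)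
  qed
  finally have "(1 - q) ^ m \<le> 1 / (1 + x)" .
  define y where "y = 1 - (1 - q) ^ m"
  have "x / 2 \<le> x / (1 + x)" using x by (intro divide_left_mono) auto
  also have "x / (1 + x) = 1 - 1 / (1 + x)" using x by (simp add: field_simps)
  also have "\<dots> \<le> y" unfolding y_def using \<open>(1 - q) ^ m \<le> 1 / (1 + x)\<close> by simp
  finally have y_lower: "x / 2 \<le> y" .
  have "y \<le> 1" unfolding y_def using q by simp
  then have "y\<^sup>2 \<le> 1" using y_lower x by (simp add: power_le_one)
  moreover have "(x / 2)\<^sup>2 \<le> y\<^sup>2" using y_lower x by (intro power_mono) auto
  ultimately have "0 \<le> 1 - y\<^sup>2" "1 - y\<^sup>2 \<le> exp (- (x\<^sup>2 / 4))"
    using exp_ge_add_one_self[of "- (x\<^sup>2 / 4)"] by (simp_all add: power_divide)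
  then have "(1 - y\<^sup>2) ^ m \<le> exp (- (x\<^sup>2 / 4)) ^ m" by (intro power_mono)
  also have "\<dots> = exp (- (real m ^ 3 * q\<^sup>2 / 4))"
    unfolding x_def using exp_of_nat_mult[of m "- ((real m * q)\<^sup>2 / 4)"]
    by (simp add: power2_eq_square power3_eq_cube field_simps)
  finally show ?thesis unfolding y_def .
qed

lemma linear_less_two_power: "8 \<le> j \<Longrightarrow> 24 * j + 18 < (2::nat) ^ j"
proof (induction j rule: nat_induct_at_least)
  case (Suc j)
  have "(24::nat) \<le> 2 ^ 8" by simp
  also have "(2::nat) ^ 8 \<le> 2 ^ j" using Suc.hyps by (intro power_increasing) auto
  finally show ?case using Suc.IH by simp
qed simp

lemma mult_half_power_div_4_less:
  assumes "32 \<le> n"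
  shows "real n * (1 / 2) ^ (n div 4) < 1 / 6"
proof -
  have "n \<le> 4 * (n div 4) + 3" by simp
  then have "6 * n < 2 ^ (n div 4)"
    using linear_less_two_power[of "n div 4"] assms by simp
  then have "6 * real n < 2 ^ (n div 4)"
    by (metis of_nat_less_iff of_nat_mult of_nat_numeral of_nat_power)
  then show ?thesis by (simp add: power_divide field_simps)
qed

lemma common_neighbour_if_not_high_co_degree:
  assumes low: "\<not> high_co_degree n t E" and t: "3 * t < n" and uvw: "u < n" "v < n" "w < n"
  shows "\<exists>d<n. d \<notin> {u, v, w} \<and> {d, u} \<in> E \<and> {d, v} \<in> E \<and> {d, w} \<in> E"
proof -
  define N where "N x = {y. y < n \<and> y \<noteq> x \<and> {x, y} \<notin> E}" for x
  have N_sub: "N x \<subseteq> {0..<n}" for x unfolding N_def by auto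
  have card_N: "card (N x) < t" if "x < n" for x
    using low that unfolding high_co_degree_def N_def by (meson not_le)
  define B where "B = N u \<union> N v \<union> N w \<union> {u, v, w}"
  have "card B \<le> card (N u \<union> N v \<union> N w) + card {u, v, w}" unfolding B_def by (rule card_Un_le)
  moreover have "card (N u \<union> N v \<union> N w) \<le> card (N u) + card (N v) + card (N w)"
    using card_Un_le[of "N u \<union> N v" "N w"] card_Un_le[of "N u" "N v"] by linarith
  moreover have "card {u, v, w} \<le> 3" by (simp add: card_insert_if)
  ultimately have "card B < n" using card_N[OF uvw(1)] card_N[OF uvw(2)] card_N[OF uvw(3)] t by linarith
  moreover have "finite B" unfolding B_def by (simp add: finite_subset[OF N_sub])
  ultimately have "\<not> {0..<n} \<subseteq> B" using card_mono[of B "{0..<n}"] by auto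
  then obtain d where "d < n" "d \<notin> B" by (meson atLeastLessThan_iff subsetI zero_le)
  then show ?thesis unfolding B_def N_def by (auto simp: insert_commute)
qed

lemma exists_connected_good_paw:
  assumes E: "E \<subseteq> all_edges n" and no_cycle: "\<not> short_co_cycle n E"
    and low: "\<not> high_co_degree n t E" and cherry: "co_cherry m E"
    and m: "3 * m \<le> n" and t: "3 * t < n"
  shows "\<exists>W\<subseteq>{0..<n}. card W = 4 \<and> good_set 2 E W \<and> graph_connected W (induced_edges E W)"
proof -
  obtain v a c where v: "v < m" and a: "a \<in> {m..<2 * m}" and c: "c \<in> {2 * m..<3 * m}"
    and va: "{v, a} \<notin> E" and vc: "{v, c} \<notin> E"
    using cherry unfolding co_cherry_def by blast
  have lt: "v < a" "a < c" "c < n" using v a c m by auto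
  have ac: "{a, c} \<in> E"
  proof (rule ccontr)
    assume "{a, c} \<notin> E"
    then have "short_co_cycle n E" unfolding short_co_cycle_def using lt va vc
      by (intro disjI1 exI[of _ v] exI[of _ a] exI[of _ c]) (auto simp: insert_commute)
    then show False using no_cycle by simp
  qed
  obtain d where d: "d < n" "d \<notin> {a, v, c}" "{d, a} \<in> E" "{d, v} \<in> E" "{d, c} \<in> E"
    using common_neighbour_if_not_high_co_degree[OF low t, of a v c] lt by auto
  then have "good_set 2 E {a, v, c, d} \<and> graph_connected {a, v, c, d} (induced_edges E {a, v, c, d})"
    using lt by (intro good_set_paw[OF E _ va vc ac]) auto
  moreover have "card {a, v, c, d} = 4" "{a, v, c, d} \<subseteq> {0..<n}" using lt d by auto
  ultimately show ?thesis by blast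
qed

lemma coin_prob_short_co_cycle_lt:
  assumes "0 \<le> p" "p \<le> 1" "real n * (1 - p) \<le> 1 / 4"
  shows "coin_prob p (all_edges n) (short_co_cycle n) < 1 / 6"
proof -
  have "(real n * (1 - p)) ^ 3 + (real n * (1 - p)) ^ 4 + (real n * (1 - p)) ^ 5
      \<le> (1 / 4) ^ 3 + (1 / 4) ^ 4 + (1 / 4) ^ 5"
    using assms by (intro add_mono power_mono) auto
  moreover have "(1 / 4) ^ 3 + (1 / 4) ^ 4 + (1 / 4) ^ 5 < (1 / 6 :: real)" by (simp add: power_divide)
  ultimately show ?thesis using coin_prob_short_co_cycle_le[OF assms(1,2), of n] by linarith
qed

lemma coin_prob_high_co_degree_lt:
  assumes "0 \<le> p" "p \<le> 1" "32 \<le> n" "real n * (1 - p) \<le> 1 / 4"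
  shows "coin_prob p (all_edges n) (high_co_degree n (n div 4)) < 1 / 6"
proof -
  have "(real n * (1 - p)) ^ (n div 4) \<le> (1 / 2) ^ (n div 4)"
    using assms by (intro power_mono) auto
  then have "real n * (real n * (1 - p)) ^ (n div 4) \<le> real n * (1 / 2) ^ (n div 4)"
    by (intro mult_left_mono) auto
  then show ?thesis
    using coin_prob_high_co_degree_le[OF assms(1,2), of n "n div 4"]
      mult_half_power_div_4_less[OF assms(3)] by linarith
qed

lemma coin_prob_no_co_cherry_lt:
  assumes p: "0 \<le> p" "p \<le> 1" and n: "32 \<le> n" "real n * (1 - p) \<le> 1 / 4"
    and big: "1600 \<le> (1 - p)\<^sup>2 * real n ^ 3"
  shows "coin_prob p (all_edges n) (\<lambda>E. \<not> co_cherry (n div 3) E) < 1 / 6"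
proof -
  define m where "m = n div 3"
  have "real m * (1 - p) \<le> real n * (1 - p)" unfolding m_def using p by (intro mult_right_mono) auto
  then have "(1 - (1 - p ^ m)\<^sup>2) ^ m \<le> exp (- (real m ^ 3 * (1 - p)\<^sup>2 / 4))"
    using no_co_cherry_bound[of "1 - p" m] p n by simp
  moreover have "25 / 4 \<le> real m ^ 3 * (1 - p)\<^sup>2 / 4"
  proof -
    have "real n / 4 \<le> real m" unfolding m_def using n(1) by linarith
    then have "(real n / 4) ^ 3 * (1 - p)\<^sup>2 \<le> real m ^ 3 * (1 - p)\<^sup>2"
      by (intro mult_right_mono power_mono) auto
    moreover have "(real n / 4) ^ 3 * (1 - p)\<^sup>2 = (1 - p)\<^sup>2 * real n ^ 3 / 64"
      by (simp add: power_divide)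
    ultimately show ?thesis using big by linarith
  qed
  then have "exp (- (real m ^ 3 * (1 - p)\<^sup>2 / 4)) < 1 / 6"
    using exp_ge_add_one_self[of "real m ^ 3 * (1 - p)\<^sup>2 / 4"] by (simp add: exp_minus field_simps)
  ultimately show ?thesis
    using coin_prob_no_co_cherry[of "n div 3" n p] unfolding m_def by simp
qed

lemma if_ex_Greatest_eqI:
  fixes N :: nat
  assumes "Q N" "\<And>k. Q k \<Longrightarrow> k \<le> N"
  shows "(if \<exists>k. Q k then GREATEST k. Q k else 0) = N"
  using assms by (auto intro: Greatest_equality)

lemma coin_prob_connected_good_set_4_gt:
  fixes P :: real
  assumes p: "0 \<le> P" "P \<le> 1" and n: "32 \<le> n" "real n * (1 - P) \<le> 1 / 4"
    and big: "1600 \<le> (1 - P)\<^sup>2 * real n ^ 3"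
  shows "1 / 2 < coin_prob P (all_edges n)
    (\<lambda>E. \<exists>W\<subseteq>{0..<n}. card W = 4 \<and> good_set 2 E W \<and> graph_connected W (induced_edges E W))"
proof -
  let ?Pr = "coin_prob P (all_edges n)"
  let ?atypical = "\<lambda>E. \<not> co_cherry (n div 3) E \<or> short_co_cycle n E \<or> high_co_degree n (n div 4) E"
  have "?Pr ?atypical < 1 / 2"
    using coin_prob_disj_le[OF p, of "all_edges n" "\<lambda>E. \<not> co_cherry (n div 3) E"
        "\<lambda>E. short_co_cycle n E \<or> high_co_degree n (n div 4) E"]
      coin_prob_disj_le[OF p, of "all_edges n" "short_co_cycle n" "high_co_degree n (n div 4)"]
      coin_prob_no_co_cherry_lt[OF p n big] coin_prob_short_co_cycle_lt[OF p n(2)]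
      coin_prob_high_co_degree_lt[OF p n] by linarith
  moreover have "?Pr (\<lambda>E. \<not> ?atypical E) \<le> ?Pr (\<lambda>E. \<exists>W\<subseteq>{0..<n}. card W = 4 \<and> good_set 2 E W
      \<and> graph_connected W (induced_edges E W))"
    using n(1) by (intro coin_prob_mono[OF p] exists_connected_good_paw) auto
  ultimately show ?thesis
    using coin_prob_Not[OF finite_all_edges[of n], where p = P and A = ?atypical] by linarith
qed

lemma coin_prob_good_set_ge_5_lt:
  fixes P :: real
  assumes p: "0 \<le> P" "P \<le> 1" and n: "real n * (1 - P) \<le> 1 / 4" and k: "5 \<le> k"
  shows "coin_prob P (all_edges n) (\<lambda>E. \<exists>W\<subseteq>{0..<n}. card W = k \<and> good_set 2 E W) < 1 / 2"
proof -
  have "coin_prob P (all_edges n) (\<lambda>E. \<exists>W\<subseteq>{0..<n}. card W = k \<and> good_set 2 E W)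
      \<le> coin_prob P (all_edges n) (short_co_cycle n)"
  proof (rule coin_prob_mono[OF p])
    fix E assume "\<exists>W\<subseteq>{0..<n}. card W = k \<and> good_set 2 E W"
    then obtain W where "W \<subseteq> {0..<n}" "card W = k" "good_set 2 E W" by blast
    then show "short_co_cycle n E" using not_good_set_if_card_ge_5[of n E W] k by auto
  qed
  then show ?thesis using coin_prob_short_co_cycle_lt[OF p n] by linarith
qed

lemma u_d_2_eq_4_if_sparse_complement:
  fixes P :: real
  assumes p: "0 \<le> P" "P \<le> 1" and n: "32 \<le> n" "real n * (1 - P) \<le> 1 / 4"
    and big: "1600 \<le> (1 - P)\<^sup>2 * real n ^ 3"
  shows "u_d 2 n P = 4 \<and> u_d' 2 n P = 4"
proof -
  let ?Pr = "coin_prob P (all_edges n)"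
  have drop_connected: "?Pr (\<lambda>E. \<exists>W\<subseteq>{0..<n}. card W = k \<and> good_set 2 E W
        \<and> graph_connected W (induced_edges E W))
      \<le> ?Pr (\<lambda>E. \<exists>W\<subseteq>{0..<n}. card W = k \<and> good_set 2 E W)" for k
    by (rule coin_prob_mono[OF p]) blast
  note four = coin_prob_connected_good_set_4_gt[OF p n big]
  note large = coin_prob_good_set_ge_5_lt[OF p n(2)]
  have "u_d 2 n P = 4"
    unfolding u_d_def Let_def prob_Gnp_eq_coin_prob
  proof (rule if_ex_Greatest_eqI)
    fix k assume "0 < k \<and> 1 / 2 < ?Pr (\<lambda>E. \<exists>W\<subseteq>{0..<n}. card W = k \<and> good_set 2 E W)"
    then show "k \<le> 4" using large[of k] by (cases "5 \<le> k") auto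
  qed (use four drop_connected[of 4] in simp)
  moreover have "u_d' 2 n P = 4"
    unfolding u_d'_def Let_def prob_Gnp_eq_coin_prob
  proof (rule if_ex_Greatest_eqI)
    fix k assume "0 < k \<and> 1 / 2 < ?Pr (\<lambda>E. \<exists>W\<subseteq>{0..<n}. card W = k \<and> good_set 2 E W
        \<and> graph_connected W (induced_edges E W))"
    then show "k \<le> 4" using large[of k] drop_connected[of k] by (cases "5 \<le> k") auto
  qed (use four in simp)
  ultimately show ?thesis ..
qed

lemma eventually_sparse_complement:
  fixes p :: "nat \<Rightarrow> real"
  assumes prob: "\<And>n. 0 \<le> p n \<and> p n \<le> 1"
    and q_small: "(\<lambda>n. 1 - p n) \<in> o(\<lambda>n. 1 / real n)"
    and q_large: "filterlim (\<lambda>n. (1 - p n) * real n powr 1.5) at_top sequentially"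
  shows "\<forall>\<^sub>F n in sequentially. 32 \<le> n \<and> real n * (1 - p n) \<le> 1 / 4 \<and> 1600 \<le> (1 - p n)\<^sup>2 * real n ^ 3"
proof -
  have "\<forall>\<^sub>F n in sequentially. norm (1 - p n) \<le> 1 / 4 * norm (1 / real n)"
    using landau_o.smallD[OF q_small, of "1 / 4"] by simp
  moreover have "\<forall>\<^sub>F n in sequentially. 40 \<le> (1 - p n) * real n powr 1.5"
    using q_large unfolding filterlim_at_top by blast
  ultimately show ?thesis using eventually_ge_at_top[of 32]
  proof eventually_elim
    case (elim n)
    then have n: "0 < real n" by simp
    have q: "0 \<le> 1 - p n" using prob[of n] by simp
    have "(real n powr 1.5)\<^sup>2 = real n ^ 3"
      using n by (simp add: power2_eq_square powr_add[symmetric])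
    then have "1600 \<le> (1 - p n)\<^sup>2 * real n ^ 3"
      using power_mono[OF elim(2), of 2] by (simp add: power_mult_distrib)
    then show ?case using elim n q by (simp add: field_simps)
  qed
qed

theorem theorem15:
  fixes p :: "nat \<Rightarrow> real"
  assumes prob: "\<And>n. 0 \<le> p n \<and> p n \<le> 1"
    and q_small: "(\<lambda>n. 1 - p n) \<in> o(\<lambda>n. 1 / real n)"
    and q_large: "filterlim (\<lambda>n. (1 - p n) * real n powr 1.5) at_top sequentially"
  shows "\<forall>\<^sub>F n in sequentially. u_d 2 n (p n) = 4 \<and> u_d' 2 n (p n) = 4"
  using eventually_sparse_complement[OF prob q_small q_large]
proof eventually_elim
  case (elim n)
  then show ?case using prob[of n] by (intro u_d_2_eq_4_if_sparse_complement) auto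
qed

end
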